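(* Let $a<b$, $n\in\mathbb{N}$, and let $X_n=\{x_0,\dots,x_n\}$ with $a=x_0<x_1<\dots<x_n=b$. Let $S=\{s_1,\dots,s_m\}\subset(a,b)$ be such that $s_\ell\in(x_{\alpha_\ell},x_{\alpha_\ell+1})$ for integers $0<\alpha_1<\dots<\alpha_m<n-1$ satisfying $\alpha_\ell+1<\alpha_{\ell+1}$ for $\ell=1,\dots,m-1$. Define the intervals $$I_0=[x_0,x_{\alpha_1}],\qquad I_\ell=[x_{\alpha_\ell+1},x_{\alpha_{\ell+1}}]\ (\ell=1,\dots,m-1),\qquad I_m=[x_{\alpha_m+1},x_n],$$ let $h^{\min}=\min_{\ell=0,\dots,m}|I_\ell|$ (length), and let $$h^{\max}_{X_n}=\max\{\,x_{i+1}-x_i:\ 0\le i\le n-1,\ s_\ell\notin(x_i,x_{i+1})\ \text{for all }\ell=1,\dots,m\,\}.$$ For $r>0$ and $x\in[a,b]$ let $\mathcal{I}_{r,x}$ be the set of closed intervals $I\subset\bigcup_{\ell=0}^m I_\ell$ with $|I|=r$ and $x\in I$, and define $$r_0=\inf\Big\{r\in\mathbb{R}_+:\ r\le h^{\min}\ \text{and}\ \forall x\in\textstyle\bigcup_{\ell=0}^m I_\ell\ \exists I\in\mathcal{I}_{r,x}\ \text{with}\ \mathrm{card}(I\cap X_n)\ge 1\Big\}.$$ If $h^{\min}\ge h^{\max}_{X_n}$, then $r_0$ exists (the set over which the infimum is taken is nonempty) and $r_0\in\mathbb{R}_+$, i.e. $r_0>0$.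
   Context: $\mathbb{R}_+$ denotes the positive reals; $\mathrm{card}$ denotes cardinality and $|I|$ the length of an interval $I$. *)

theory Defs
  imports Complex_Main
begin

definition seg_lo :: "(nat \<Rightarrow> real) \<Rightarrow> (nat \<Rightarrow> nat) \<Rightarrow> nat \<Rightarrow> real" where
  "seg_lo x \<alpha> l = (if l = 0 then x 0 else x (\<alpha> l + 1))"

definition seg_hi :: "(nat \<Rightarrow> real) \<Rightarrow> (nat \<Rightarrow> nat) \<Rightarrow> nat \<Rightarrow> nat \<Rightarrow> nat \<Rightarrow> real" where
  "seg_hi x \<alpha> m n l = (if l = m then x n else x (\<alpha> (l + 1)))"

definition seg :: "(nat \<Rightarrow> real) \<Rightarrow> (nat \<Rightarrow> nat) \<Rightarrow> nat \<Rightarrow> nat \<Rightarrow> nat \<Rightarrow> real set" where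
  "seg x \<alpha> m n l = {seg_lo x \<alpha> l .. seg_hi x \<alpha> m n l}"

definition h_min :: "(nat \<Rightarrow> real) \<Rightarrow> (nat \<Rightarrow> nat) \<Rightarrow> nat \<Rightarrow> nat \<Rightarrow> real" where
  "h_min x \<alpha> m n = Min {seg_hi x \<alpha> m n l - seg_lo x \<alpha> l | l. l \<le> m}"

definition h_max :: "(nat \<Rightarrow> real) \<Rightarrow> (nat \<Rightarrow> real) \<Rightarrow> nat \<Rightarrow> nat \<Rightarrow> real" where
  "h_max x s m n = Max {x (i + 1) - x i | i. i < n \<and> (\<forall>l\<in>{1..m}. s l \<notin> {x i <..< x (i + 1)})}"

text \<open>The set whose infimum is r_0. A closed interval of length r is {c..c+r}.\<close>
definition r0_set :: "(nat \<Rightarrow> real) \<Rightarrow> (nat \<Rightarrow> nat) \<Rightarrow> nat \<Rightarrow> nat \<Rightarrow> real set" where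
  "r0_set x \<alpha> m n = {r. r > 0 \<and> r \<le> h_min x \<alpha> m n \<and>
     (\<forall>y \<in> (\<Union>l\<le>m. seg x \<alpha> m n l).
        \<exists>c. {c..c+r} \<subseteq> (\<Union>l\<le>m. seg x \<alpha> m n l) \<and> y \<in> {c..c+r} \<and>
            card ({c..c+r} \<inter> x ` {0..n}) \<ge> 1)}"

end

theory Submission
  imports Defs
begin

text \<open>
  The number h_min itself belongs to r0_set. A cell (x_j, x_j+1) inside a segment I_l contains
  no point of S, so its length is at most h_max \<le> h_min. Hence for y \<in> I_l either the window
  of length h_min at the left end of I_l or the window [y - h_min, y] lies in I_l, contains y and
  contains a node. Conversely, the midpoint of [x_0, x_1] \<subseteq> I_0 has distance at least
  (x_1 - x_0)/2 from every node, so this bounds r0_set from below.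
\<close>

lemma lift_Suc_mono_less_on:
  fixes f :: "nat \<Rightarrow> 'a::preorder"
  assumes "\<And>k. p \<le> k \<Longrightarrow> k < q \<Longrightarrow> f k < f (Suc k)"
    and "p \<le> i" and "i < j" and "j \<le> q"
  shows "f i < f j"
proof -
  have "p \<le> i \<longrightarrow> j \<le> q \<longrightarrow> f i < f j"
    using \<open>i < j\<close>
    by (induct i j rule: less_Suc_induct) (auto intro: assms(1) order.strict_trans)
  with assms(2,4) show ?thesis by blast
qed

lemma lift_Suc_mono_le_on:
  fixes f :: "nat \<Rightarrow> 'a::preorder"
  assumes "\<And>k. p \<le> k \<Longrightarrow> k < q \<Longrightarrow> f k < f (Suc k)"
    and "p \<le> i" and "i \<le> j" and "j \<le> q"
  shows "f i \<le> f j"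
  using lift_Suc_mono_less_on[of p q f i j] assms by (cases "i = j") (auto intro: less_imp_le)

lemma node_within_mesh_below:
  fixes x :: "nat \<Rightarrow> real"
  assumes "p \<le> q" and "\<And>j. p \<le> j \<Longrightarrow> j < q \<Longrightarrow> x (Suc j) - x j \<le> h"
    and "0 \<le> h" and "x p \<le> y" and "y \<le> x q"
  shows "\<exists>j\<in>{p..q}. y - h \<le> x j \<and> x j \<le> y"
  using assms
proof (induction q arbitrary: y rule: dec_induct)
  case base
  then show ?case by auto
next
  case (step q)
  show ?case
  proof (cases "y \<le> x q")
    case True
    with step show ?thesis by fastforce
  next
    case False
    have "x (Suc q) - x q \<le> h" using step by simp
    with False step.prems(4) step.hyps(1) show ?thesis by (intro bexI[of _ q]) auto
  qed
qed

lemma window_with_node: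
  fixes x :: "nat \<Rightarrow> real"
  assumes "p \<le> q" and "\<And>j. p \<le> j \<Longrightarrow> j < q \<Longrightarrow> x (Suc j) - x j \<le> h"
    and "0 \<le> h" and "h \<le> x q - x p" and "x p \<le> y" and "y \<le> x q"
  shows "\<exists>c. x p \<le> c \<and> c + h \<le> x q \<and> y \<in> {c..c + h} \<and> (\<exists>j\<in>{p..q}. x j \<in> {c..c + h})"
proof (cases "y \<le> x p + h")
  case True
  with assms show ?thesis by (intro exI[of _ "x p"]) auto
next
  case False
  obtain j where "j \<in> {p..q}" "y - h \<le> x j" "x j \<le> y"
    using node_within_mesh_below[OF assms(1,2,3,5,6)] by blast
  with False assms(6) show ?thesis by (intro exI[of _ "y - h"]) auto
qed

locale marked_partition =
  fixes x :: "nat \<Rightarrow> real" and n m :: nat and \<alpha> :: "nat \<Rightarrow> nat" and s :: "nat \<Rightarrow> real"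
  assumes x_step: "\<And>i. i < n \<Longrightarrow> x i < x (i + 1)"
    and m_pos: "m \<ge> 1"
    and \<alpha>_first: "0 < \<alpha> 1"
    and \<alpha>_last: "\<alpha> m < n - 1"
    and \<alpha>_step: "\<And>l. 1 \<le> l \<Longrightarrow> l < m \<Longrightarrow> \<alpha> l + 1 < \<alpha> (l + 1)"
    and s_in_cell: "\<And>l. 1 \<le> l \<Longrightarrow> l \<le> m \<Longrightarrow> s l \<in> {x (\<alpha> l) <..< x (\<alpha> l + 1)}"
begin

lemma x_less: "i < j \<Longrightarrow> j \<le> n \<Longrightarrow> x i < x j"
  using lift_Suc_mono_less_on[of 0 n x i j] x_step by simp

lemma x_le: "i \<le> j \<Longrightarrow> j \<le> n \<Longrightarrow> x i \<le> x j"
  using lift_Suc_mono_le_on[of 0 n x i j] x_step by simp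

lemma node_notin_cell: "k \<le> n \<Longrightarrow> i < n \<Longrightarrow> x k \<notin> {x i <..< x (i + 1)}"
  using x_le[of k i] x_le[of "i + 1" k] by (cases "k \<le> i") auto

lemma cells_disjoint:
  assumes "i < n" and "j < n" and "i \<noteq> j"
  shows "{x i <..< x (i + 1)} \<inter> {x j <..< x (j + 1)} = {}"
proof -
  have ordered: "{x i <..< x (i + 1)} \<inter> {x j <..< x (j + 1)} = {}" if "i < j" "j < n" for i j
  proof -
    have "x (i + 1) \<le> x j" using x_le[of "i + 1" j] that by simp
    then show ?thesis by auto
  qed
  from assms show ?thesis
    using ordered[of i j] ordered[of j i] by (metis Int_commute linorder_neqE_nat)
qed

lemma \<alpha>_le: "1 \<le> l \<Longrightarrow> l \<le> l' \<Longrightarrow> l' \<le> m \<Longrightarrow> \<alpha> l \<le> \<alpha> l'"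
  using lift_Suc_mono_le_on[of 1 m \<alpha> l l'] \<alpha>_step by fastforce

lemma \<alpha>_bounds: "1 \<le> l \<Longrightarrow> l \<le> m \<Longrightarrow> 1 \<le> \<alpha> l \<and> \<alpha> l + 1 < n"
  using \<alpha>_le[of 1 l] \<alpha>_le[of l m] \<alpha>_first \<alpha>_last by auto

lemma n_ge_2: "2 \<le> n"
  using \<alpha>_last by linarith

definition first_node :: "nat \<Rightarrow> nat" where
  "first_node l = (if l = 0 then 0 else \<alpha> l + 1)"

definition last_node :: "nat \<Rightarrow> nat" where
  "last_node l = (if l = m then n else \<alpha> (l + 1))"

lemma seg_lo_eq: "seg_lo x \<alpha> l = x (first_node l)"
  by (simp add: seg_lo_def first_node_def)

lemma seg_hi_eq: "seg_hi x \<alpha> m n l = x (last_node l)"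
  by (simp add: seg_hi_def last_node_def)

lemma last_node_le: "l \<le> m \<Longrightarrow> last_node l \<le> n"
  using \<alpha>_bounds[of "l + 1"] by (auto simp: last_node_def)

lemma last_node_0_pos: "0 < last_node 0"
  using m_pos \<alpha>_first by (auto simp: last_node_def)

lemma first_le_last_node: "l \<le> m \<Longrightarrow> first_node l \<le> last_node l"
  using \<alpha>_bounds[of l] \<alpha>_step[of l] by (auto simp: first_node_def last_node_def)

lemma \<alpha>_notin_segment:
  assumes "l \<le> m" and "l' \<in> {1..m}"
  shows "\<alpha> l' \<notin> {first_node l ..< last_node l}"
proof (cases "l' \<le> l")
  case True
  with assms have "\<alpha> l' < first_node l" using \<alpha>_le[of l' l] by (auto simp: first_node_def)
  then show ?thesis by simp
next
  case False
  with assms have "last_node l \<le> \<alpha> l'" using \<alpha>_le[of "l + 1" l'] by (auto simp: last_node_def)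
  then show ?thesis by simp
qed

lemma gap_le_h_max:
  assumes "l \<le> m" and "first_node l \<le> j" and "j < last_node l"
  shows "x (j + 1) - x j \<le> h_max x s m n"
proof -
  have j: "j < n" using assms last_node_le by (meson order.strict_trans2)
  have "s l' \<notin> {x j <..< x (j + 1)}" if "l' \<in> {1..m}" for l'
  proof -
    have "j \<noteq> \<alpha> l'" using \<alpha>_notin_segment[OF assms(1) that] assms(2,3) by auto
    then show ?thesis
      using cells_disjoint[of "\<alpha> l'" j] \<alpha>_bounds[of l'] s_in_cell[of l'] j that by auto
  qed
  moreover have "finite {x (i + 1) - x i | i. i < n \<and> (\<forall>l\<in>{1..m}. s l \<notin> {x i <..< x (i + 1)})}"
    by (rule finite_subset[of _ "(\<lambda>i. x (i + 1) - x i) ` {..<n}"]) auto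
  ultimately show ?thesis
    unfolding h_max_def using j by (intro Max_ge) auto
qed

lemma first_gap_le_h_max: "x 1 - x 0 \<le> h_max x s m n"
  using gap_le_h_max[of 0 0] last_node_0_pos by (simp add: first_node_def)

lemma h_min_le_segment_length: "l \<le> m \<Longrightarrow> h_min x \<alpha> m n \<le> x (last_node l) - x (first_node l)"
  unfolding h_min_def seg_lo_eq seg_hi_eq by (rule Min_le) auto

lemma one_le_card_nodes_iff: "1 \<le> card (A \<inter> x ` {0..n}) \<longleftrightarrow> (\<exists>k\<le>n. x k \<in> A)"
  by (auto simp: Suc_le_eq card_gt_0_iff)

lemma h_min_in_r0_set:
  assumes "h_max x s m n \<le> h_min x \<alpha> m n"
  shows "h_min x \<alpha> m n \<in> r0_set x \<alpha> m n"
proof -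
  let ?h = "h_min x \<alpha> m n" and ?U = "\<Union>l\<le>m. seg x \<alpha> m n l"
  have h_pos: "0 < ?h"
    using first_gap_le_h_max x_less[of 0 1] n_ge_2 assms by linarith
  have "\<exists>c. {c..c + ?h} \<subseteq> ?U \<and> y \<in> {c..c + ?h} \<and> 1 \<le> card ({c..c + ?h} \<inter> x ` {0..n})"
    if "y \<in> ?U" for y
  proof -
    obtain l where l: "l \<le> m" "y \<in> seg x \<alpha> m n l" using \<open>y \<in> ?U\<close> by (elim UN_E) simp
    have y: "x (first_node l) \<le> y" "y \<le> x (last_node l)"
      using l(2) by (auto simp: seg_def seg_lo_eq seg_hi_eq)
    have gaps: "x (Suc j) - x j \<le> ?h" if "first_node l \<le> j" "j < last_node l" for j
      using gap_le_h_max[OF l(1) that] assms by simp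
    obtain c j where c: "x (first_node l) \<le> c" "c + ?h \<le> x (last_node l)" "y \<in> {c..c + ?h}"
      and j: "j \<in> {first_node l..last_node l}" "x j \<in> {c..c + ?h}"
      using window_with_node[OF first_le_last_node[OF l(1)] gaps less_imp_le[OF h_pos]
          h_min_le_segment_length[OF l(1)] y]
      by blast
    have "{c..c + ?h} \<subseteq> ?U"
      using c l(1) by (auto simp: seg_def seg_lo_eq seg_hi_eq)
    moreover have "\<exists>k\<le>n. x k \<in> {c..c + ?h}"
      using j last_node_le[OF l(1)] by (intro exI[of _ j]) auto
    ultimately show ?thesis
      using c(3) unfolding one_le_card_nodes_iff by blast
  qed
  with h_pos show ?thesis by (auto simp: r0_set_def)
qed

lemma r0_set_ge_half_first_gap:
  assumes "r \<in> r0_set x \<alpha> m n"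
  shows "(x 1 - x 0) / 2 \<le> r"
proof -
  let ?y = "(x 0 + x 1) / 2"
  have "x 1 \<le> x (last_node 0)"
    using x_le[of 1 "last_node 0"] last_node_0_pos last_node_le[of 0] by simp
  then have "?y \<in> seg x \<alpha> m n 0"
    using x_less[of 0 1] n_ge_2 by (simp add: seg_def seg_lo_eq seg_hi_eq first_node_def)
  then obtain c where c: "?y \<in> {c..c + r}" "1 \<le> card ({c..c + r} \<inter> x ` {0..n})"
    using assms unfolding r0_set_def by blast
  then obtain k where "k \<le> n" "x k \<in> {c..c + r}"
    unfolding one_le_card_nodes_iff by blast
  moreover have "x k \<notin> {x 0 <..< x 1}"
    using node_notin_cell[of k 0] \<open>k \<le> n\<close> n_ge_2 by simp
  ultimately have "x k \<le> x 0 \<or> x 1 \<le> x k" by auto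
  with c(1) \<open>x k \<in> {c..c + r}\<close> show ?thesis by auto
qed

end

theorem theorem1:
  fixes a b :: real and n m :: nat and x s :: "nat \<Rightarrow> real" and \<alpha> :: "nat \<Rightarrow> nat"
  assumes "a < b"
    and "x 0 = a" and "x n = b"
    and "\<And>i. i < n \<Longrightarrow> x i < x (i + 1)"
    and "m \<ge> 1"
    and "0 < \<alpha> 1" and "\<alpha> m < n - 1"
    and "\<And>l. 1 \<le> l \<Longrightarrow> l < m \<Longrightarrow> \<alpha> l + 1 < \<alpha> (l + 1)"
    and "\<And>l. 1 \<le> l \<Longrightarrow> l \<le> m \<Longrightarrow> s l \<in> {x (\<alpha> l) <..< x (\<alpha> l + 1)}"
    and "h_min x \<alpha> m n \<ge> h_max x s m n"
  shows "r0_set x \<alpha> m n \<noteq> {} \<and> Inf (r0_set x \<alpha> m n) > 0"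
proof -
  interpret marked_partition x n m \<alpha> s
    using assms(4-9) by unfold_locales
  have nonempty: "r0_set x \<alpha> m n \<noteq> {}"
    using h_min_in_r0_set[OF assms(10)] by blast
  have "(x 1 - x 0) / 2 \<le> Inf (r0_set x \<alpha> m n)"
    using nonempty r0_set_ge_half_first_gap by (rule cInf_greatest)
  moreover have "0 < (x 1 - x 0) / 2"
    using x_less[of 0 1] n_ge_2 by simp
  ultimately show ?thesis using nonempty by linarith
qed

end
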